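(* Let $f:M\to M$ be a partially hyperbolic endomorphism of a closed manifold $M$ and let $x\in M$. (I) If $E^c_1(x)$, $E^c_2(x)$ are two center directions at $x$, then the angle between $Df^n_x(E^c_1(x))$ and $Df^n_x(E^c_2(x))$ tends to $0$ as $n\to+\infty$. (II) If $E^u_1(x)$, $E^u_2(x)$ are two unstable directions at $x$, then the angle between $Df^n_x(E^u_1(x))$ and $Df^n_x(E^u_2(x))$ tends to $0$ as $n\to+\infty$.
   Context: A $C^1$ local diffeomorphism $f:M\to M$ is a partially hyperbolic endomorphism if there are a Riemannian metric and constants $0<\nu<\gamma_1\le\gamma_2<\mu$, $\nu<1<\mu$, $C>1$ such that for every orbit $(x_n)_{n\in\mathbb{Z}}$ ($f(x_n)=x_{n+1}$) there is a splitting $T_{x_n}M=E^s_f(x_n)\oplus E^c_f(x_n)\oplus E^u_f(x_n)$, $Df$-invariant along the orbit, with $\|Df^n_{x_i}v^s\|\le C\nu^n\|v^s\|$, $C^{-1}\gamma_1^n\|v^c\|\le\|Df^n_{x_i}v^c\|\le C\gamma_2^n\|v^c\|$, $C^{-1}\mu^n\|v^u\|\le\|Df^n_{x_i}v^u\|$ for all $n\ge0$, $i\in\mathbb{Z}$, $v^\ast\in E^\ast_f(x_i)$. For $\sigma\in\{c,u\}$, a $\sigma$-direction at $x$ is $E^\sigma_f(x_0)$ for some orbit with $x_0=x$. *)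

theory Defs
  imports "HOL-Analysis.Analysis"
begin

text \<open>Closed manifolds are modelled as compact embedded C1 submanifolds (without
boundary) of a Euclidean space (Whitney embedding).\<close>

definition C1_on :: "'a::euclidean_space set \<Rightarrow> ('a \<Rightarrow> 'b::euclidean_space) \<Rightarrow> bool" where
  "C1_on U \<phi> \<longleftrightarrow> (\<exists>\<phi>'. (\<forall>y\<in>U. (\<phi> has_derivative blinfun_apply (\<phi>' y)) (at y))
                       \<and> continuous_on U \<phi>')"

definition closed_C1_manifold :: "'a::euclidean_space set \<Rightarrow> bool" where
  "closed_C1_manifold M \<longleftrightarrow> compact M \<and>
     (\<forall>x\<in>M. \<exists>U V (\<phi>::'a \<Rightarrow> 'a) \<psi> S. open U \<and> x \<in> U \<and> open V \<and> homeomorphism U V \<phi> \<psi>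
        \<and> C1_on U \<phi> \<and> C1_on V \<psi> \<and> subspace S \<and> \<phi> ` (M \<inter> U) = V \<inter> S)"

definition tangent_space :: "'a::euclidean_space set \<Rightarrow> 'a \<Rightarrow> 'a set" where
  "tangent_space M x = {v. \<exists>\<gamma>::real \<Rightarrow> 'a. (\<forall>t. \<gamma> t \<in> M) \<and> \<gamma> 0 = x
                              \<and> (\<gamma> has_vector_derivative v) (at 0)}"

definition C1_local_diffeo :: "'a::euclidean_space set \<Rightarrow> ('a \<Rightarrow> 'a) \<Rightarrow> ('a \<Rightarrow> 'a \<Rightarrow>\<^sub>L 'a) \<Rightarrow> bool" where
  "C1_local_diffeo M f f' \<longleftrightarrow> f ` M \<subseteq> M \<and>
     (\<exists>U. open U \<and> M \<subseteq> U \<and> (\<forall>y\<in>U. (f has_derivative blinfun_apply (f' y)) (at y))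
          \<and> continuous_on U f') \<and>
     (\<forall>y\<in>M. bij_betw (blinfun_apply (f' y)) (tangent_space M y) (tangent_space M (f y)))"

definition riemannian_metric :: "'a::euclidean_space set \<Rightarrow> ('a \<Rightarrow> 'a \<Rightarrow> 'a \<Rightarrow> real) \<Rightarrow> bool" where
  "riemannian_metric M g \<longleftrightarrow>
     continuous_on (M \<times> (UNIV \<times> UNIV)) (\<lambda>(x, u, v). g x u v) \<and>
     (\<forall>x\<in>M. bilinear (g x) \<and> (\<forall>u v. g x u v = g x v u) \<and>
        (\<forall>v\<in>tangent_space M x. v \<noteq> 0 \<longrightarrow> g x v v > 0))"

definition gnorm :: "('a::euclidean_space \<Rightarrow> 'a \<Rightarrow> 'a \<Rightarrow> real) \<Rightarrow> 'a \<Rightarrow> 'a \<Rightarrow> real" where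
  "gnorm g x v = sqrt (g x v v)"

fun Dfn :: "('a::euclidean_space \<Rightarrow> 'a) \<Rightarrow> ('a \<Rightarrow> 'a \<Rightarrow>\<^sub>L 'a) \<Rightarrow> 'a \<Rightarrow> nat \<Rightarrow> 'a \<Rightarrow> 'a" where
  "Dfn f f' p 0 v = v"
| "Dfn f f' p (Suc n) v = blinfun_apply (f' ((f ^^ n) p)) (Dfn f f' p n v)"

definition is_orbit :: "'a::euclidean_space set \<Rightarrow> ('a \<Rightarrow> 'a) \<Rightarrow> (int \<Rightarrow> 'a) \<Rightarrow> bool" where
  "is_orbit M f x \<longleftrightarrow> (\<forall>n. x n \<in> M \<and> f (x n) = x (n + 1))"

definition ph_splitting ::
  "'a::euclidean_space set \<Rightarrow> ('a \<Rightarrow> 'a) \<Rightarrow> ('a \<Rightarrow> 'a \<Rightarrow>\<^sub>L 'a) \<Rightarrow> ('a \<Rightarrow> 'a \<Rightarrow> 'a \<Rightarrow> real)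
   \<Rightarrow> real \<Rightarrow> real \<Rightarrow> real \<Rightarrow> real \<Rightarrow> real
   \<Rightarrow> (int \<Rightarrow> 'a) \<Rightarrow> (int \<Rightarrow> 'a set) \<Rightarrow> (int \<Rightarrow> 'a set) \<Rightarrow> (int \<Rightarrow> 'a set) \<Rightarrow> bool" where
  "ph_splitting M f f' g \<nu> \<gamma>1 \<gamma>2 \<mu> C x Es Ec Eu \<longleftrightarrow>
    (\<forall>n. subspace (Es n) \<and> subspace (Ec n) \<and> subspace (Eu n) \<and>
       {a + b + c | a b c. a \<in> Es n \<and> b \<in> Ec n \<and> c \<in> Eu n} = tangent_space M (x n) \<and>
       (\<forall>a b c. a \<in> Es n \<longrightarrow> b \<in> Ec n \<longrightarrow> c \<in> Eu n \<longrightarrow> a + b + c = 0 \<longrightarrow>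
                a = 0 \<and> b = 0 \<and> c = 0) \<and>
       blinfun_apply (f' (x n)) ` Es n = Es (n + 1) \<and>
       blinfun_apply (f' (x n)) ` Ec n = Ec (n + 1) \<and>
       blinfun_apply (f' (x n)) ` Eu n = Eu (n + 1)) \<and>
    (\<forall>i. \<forall>k::nat.
       (\<forall>v\<in>Es i. gnorm g (x (i + int k)) (Dfn f f' (x i) k v) \<le> C * \<nu> ^ k * gnorm g (x i) v) \<and>
       (\<forall>v\<in>Ec i. inverse C * \<gamma>1 ^ k * gnorm g (x i) v \<le> gnorm g (x (i + int k)) (Dfn f f' (x i) k v)
                 \<and> gnorm g (x (i + int k)) (Dfn f f' (x i) k v) \<le> C * \<gamma>2 ^ k * gnorm g (x i) v) \<and>
       (\<forall>v\<in>Eu i. inverse C * \<mu> ^ k * gnorm g (x i) v \<le> gnorm g (x (i + int k)) (Dfn f f' (x i) k v)))"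

definition partially_hyperbolic ::
  "'a::euclidean_space set \<Rightarrow> ('a \<Rightarrow> 'a) \<Rightarrow> ('a \<Rightarrow> 'a \<Rightarrow>\<^sub>L 'a) \<Rightarrow> ('a \<Rightarrow> 'a \<Rightarrow> 'a \<Rightarrow> real)
   \<Rightarrow> real \<Rightarrow> real \<Rightarrow> real \<Rightarrow> real \<Rightarrow> real \<Rightarrow> bool" where
  "partially_hyperbolic M f f' g \<nu> \<gamma>1 \<gamma>2 \<mu> C \<longleftrightarrow>
     C1_local_diffeo M f f' \<and> riemannian_metric M g \<and>
     0 < \<nu> \<and> \<nu> < \<gamma>1 \<and> \<gamma>1 \<le> \<gamma>2 \<and> \<gamma>2 < \<mu> \<and> \<nu> < 1 \<and> 1 < \<mu> \<and> C > 1 \<and>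
     (\<forall>x. is_orbit M f x \<longrightarrow> (\<exists>Es Ec Eu. ph_splitting M f f' g \<nu> \<gamma>1 \<gamma>2 \<mu> C x Es Ec Eu))"

definition center_direction where
  "center_direction M f f' g \<nu> \<gamma>1 \<gamma>2 \<mu> C p E \<longleftrightarrow>
     (\<exists>x Es Ec Eu. is_orbit M f x \<and> x 0 = p \<and>
        ph_splitting M f f' g \<nu> \<gamma>1 \<gamma>2 \<mu> C x Es Ec Eu \<and> E = Ec 0)"

definition unstable_direction where
  "unstable_direction M f f' g \<nu> \<gamma>1 \<gamma>2 \<mu> C p E \<longleftrightarrow>
     (\<exists>x Es Ec Eu. is_orbit M f x \<and> x 0 = p \<and>
        ph_splitting M f f' g \<nu> \<gamma>1 \<gamma>2 \<mu> C x Es Ec Eu \<and> E = Eu 0)"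

definition vec_angle :: "('a::euclidean_space \<Rightarrow> 'a \<Rightarrow> 'a \<Rightarrow> real) \<Rightarrow> 'a \<Rightarrow> 'a \<Rightarrow> 'a \<Rightarrow> real" where
  "vec_angle g x v w = arccos (g x v w / (gnorm g x v * gnorm g x w))"

definition subspace_angle :: "('a::euclidean_space \<Rightarrow> 'a \<Rightarrow> 'a \<Rightarrow> real) \<Rightarrow> 'a \<Rightarrow> 'a set \<Rightarrow> 'a set \<Rightarrow> real" where
  "subspace_angle g x E F =
     max (Sup ({Inf {vec_angle g x v w | w. w \<in> F - {0}} | v. v \<in> E - {0}} \<union> {0}))
         (Sup ({Inf {vec_angle g x w v | v. v \<in> E - {0}} | w. w \<in> F - {0}} \<union> {0}))"

end

theory Submission
  imports Defs
begin

text \<open>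
  Two center directions \<open>E\<^sub>1, E\<^sub>2\<close> at \<open>p\<close> come from splittings along orbits that may
  differ in the past, but both are moved by the same forward derivatives \<open>Df\<^sup>n\<^sub>p\<close>.
  Decompose \<open>v \<in> E\<^sub>2\<close> along the first splitting as \<open>v = s + c + u\<close>. The iterates of \<open>v\<close>, \<open>s\<close>
  and \<open>c\<close> grow at most like \<open>\<gamma>\<^sub>2\<^sup>n\<close>, so \<open>u = 0\<close>; and \<open>c \<noteq> 0\<close> for \<open>v \<noteq> 0\<close>, because a stable
  vector cannot grow like \<open>\<gamma>\<^sub>1\<^sup>n\<close>. As \<open>E\<^sub>2\<close> is finite-dimensional, \<open>|s| \<le> B |c|\<close>, hence
  \<open>|Df\<^sup>n v - Df\<^sup>n c| = |Df\<^sup>n s| \<le> C\<^sup>2 B (\<nu>/\<gamma>\<^sub>1)\<^sup>n |Df\<^sup>n c|\<close>: every vector of \<open>Df\<^sup>n E\<^sub>2\<close> lies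
  within relative distance \<open>O((\<nu>/\<gamma>\<^sub>1)\<^sup>n)\<close> of a vector of \<open>Df\<^sup>n E\<^sub>1\<close>, uniformly, and the angle
  tends to \<open>0\<close>. For unstable directions \<open>s + c\<close> plays the role of \<open>s\<close> and \<open>u\<close> that of \<open>c\<close>,
  at the rate \<open>\<gamma>\<^sub>2/\<mu>\<close>.
\<close>

section \<open>Inner products on a subspace\<close>

lemma gnorm_scaleR:
  assumes "bilinear (g q)"
  shows "gnorm g q (c *\<^sub>R v) = \<bar>c\<bar> * gnorm g q v"
proof -
  have "g q (c *\<^sub>R v) (c *\<^sub>R v) = c\<^sup>2 * g q v v"
    using assms by (simp add: bilinear_lmul bilinear_rmul power2_eq_square)
  then show ?thesis by (simp add: gnorm_def real_sqrt_mult)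
qed

lemma gnorm_le_norm:
  fixes g :: "'a::euclidean_space \<Rightarrow> 'a \<Rightarrow> 'a \<Rightarrow> real"
  assumes "bilinear (g q)"
  obtains K where "K \<ge> 0" "\<And>v. gnorm g q v \<le> K * norm v"
proof -
  obtain K where K: "K \<ge> 0" "\<And>u v. norm (g q u v) \<le> norm u * norm v * K"
    using assms bounded_bilinear.nonneg_bounded by (metis bilinear_conv_bounded_bilinear)
  have "gnorm g q v \<le> sqrt K * norm v" for v
  proof -
    have "(sqrt K * norm v)\<^sup>2 = norm v * norm v * K"
      using K(1) by (simp add: power_mult_distrib power2_eq_square)
    then have "g q v v \<le> (sqrt K * norm v)\<^sup>2"
      using K(2)[of v v] by simp
    then show ?thesis
      unfolding gnorm_def using K(1) by (simp add: real_le_lsqrt)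
  qed
  then show thesis using K(1) by (intro that[of "sqrt K"]) auto
qed

locale inner_form =
  fixes g :: "'a::euclidean_space \<Rightarrow> 'a \<Rightarrow> 'a \<Rightarrow> real" and q :: 'a and T :: "'a set"
  assumes form_subspace: "subspace T"
    and form_bilinear: "bilinear (g q)"
    and form_sym: "g q u v = g q v u"
    and form_pos: "v \<in> T \<Longrightarrow> v \<noteq> 0 \<Longrightarrow> 0 < g q v v"
begin

lemma form_nonneg: "v \<in> T \<Longrightarrow> 0 \<le> g q v v"
  using form_pos form_bilinear by (cases "v = 0") (auto simp: bilinear_lzero less_imp_le)

lemma gnorm_nonneg: "v \<in> T \<Longrightarrow> 0 \<le> gnorm g q v"
  using form_nonneg by (simp add: gnorm_def)

lemma gnorm_square: "v \<in> T \<Longrightarrow> (gnorm g q v)\<^sup>2 = g q v v"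
  using form_nonneg by (simp add: gnorm_def)

lemma gnorm_eq_0_iff: "v \<in> T \<Longrightarrow> gnorm g q v = 0 \<longleftrightarrow> v = 0"
  using form_pos[of v] form_bilinear unfolding gnorm_def by (cases "v = 0") (auto simp: bilinear_lzero)

lemma gnorm_pos: "v \<in> T \<Longrightarrow> v \<noteq> 0 \<Longrightarrow> 0 < gnorm g q v"
  using gnorm_nonneg gnorm_eq_0_iff by fastforce

lemma form_expand:
  "g q (v + t *\<^sub>R w) (v + t *\<^sub>R w) = g q v v + 2 * t * g q v w + t\<^sup>2 * g q w w"
proof -
  have "g q (v + t *\<^sub>R w) (v + t *\<^sub>R w) = g q v v + t * g q v w + t * g q w v + t * t * g q w w"
    using form_bilinear by (simp add: bilinear_ladd bilinear_radd bilinear_lmul bilinear_rmul algebra_simps)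
  then show ?thesis using form_sym[of w v] by (simp add: power2_eq_square algebra_simps)
qed

lemma form_cauchy_schwarz:
  assumes "v \<in> T" "w \<in> T"
  shows "\<bar>g q v w\<bar> \<le> gnorm g q v * gnorm g q w"
proof -
  have "(g q v w)\<^sup>2 \<le> g q v v * g q w w"
  proof (cases "w = 0")
    case True
    then show ?thesis using form_bilinear by (simp add: bilinear_rzero)
  next
    case False
    have pos: "0 < g q w w"
      using form_pos False assms(2) by blast
    define t where "t = - g q v w / g q w w"
    have "v + t *\<^sub>R w \<in> T"
      using assms form_subspace by (simp add: subspace_add subspace_scale)
    then have "0 \<le> g q (v + t *\<^sub>R w) (v + t *\<^sub>R w)"
      by (rule form_nonneg)
    also have "\<dots> = g q v v + 2 * t * g q v w + t\<^sup>2 * g q w w"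
      by (rule form_expand)
    also have "\<dots> = g q v v - (g q v w)\<^sup>2 / g q w w"
      using pos by (simp add: t_def power2_eq_square field_simps)
    finally show ?thesis using pos by (simp add: divide_le_eq)
  qed
  then have "\<bar>g q v w\<bar>\<^sup>2 \<le> (gnorm g q v * gnorm g q w)\<^sup>2"
    using assms by (simp add: power_mult_distrib gnorm_square)
  then show ?thesis
    by (rule power2_le_imp_le) (use assms in \<open>simp add: gnorm_nonneg\<close>)
qed

lemma gnorm_triangle:
  assumes "v \<in> T" "w \<in> T"
  shows "gnorm g q (v + w) \<le> gnorm g q v + gnorm g q w"
proof -
  have "v + w \<in> T" using assms form_subspace by (simp add: subspace_add)
  then have "(gnorm g q (v + w))\<^sup>2 = g q v v + 2 * g q v w + g q w w"
    using form_expand[of v 1 w] by (simp add: gnorm_square)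
  also have "\<dots> \<le> (gnorm g q v + gnorm g q w)\<^sup>2"
    using form_cauchy_schwarz[OF assms] assms by (simp add: power2_sum gnorm_square)
  finally show ?thesis
    by (rule power2_le_imp_le) (use assms in \<open>simp add: gnorm_nonneg\<close>)
qed

lemma gnorm_diff_le:
  assumes "v \<in> T" "w \<in> T"
  shows "gnorm g q (v - w) \<le> gnorm g q v + gnorm g q w"
  using gnorm_triangle[of v "- w"] gnorm_scaleR[where g=g and q=q, OF form_bilinear, of "-1" w]
    assms form_subspace
  by (simp add: subspace_neg)

lemma gnorm_ge_norm:
  obtains c where "c > 0" "\<And>v. v \<in> T \<Longrightarrow> c * norm v \<le> gnorm g q v"
proof -
  have cont: "continuous_on UNIV (gnorm g q)"
    using form_bilinear unfolding gnorm_def bilinear_conv_bounded_bilinear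
    by (intro continuous_intros bounded_bilinear.continuous_on[of "g q"]) auto
  show thesis
  proof (cases "T \<inter> sphere 0 1 = {}")
    case True
    have "T \<subseteq> {0}"
    proof
      fix v assume "v \<in> T"
      show "v \<in> {0}"
      proof (rule ccontr)
        assume "v \<notin> {0}"
        then have "v /\<^sub>R norm v \<in> T \<inter> sphere 0 1"
          using \<open>v \<in> T\<close> form_subspace by (simp add: subspace_scale)
        then show False using True by blast
      qed
    qed
    then show thesis
      using form_bilinear by (intro that[of 1]) (auto simp: gnorm_def bilinear_lzero)
  next
    case False
    have "compact (T \<inter> sphere 0 1)"
      using form_subspace by (intro closed_Int_compact closed_subspace compact_sphere)
    then obtain u where u: "u \<in> T \<inter> sphere 0 1" "\<And>w. w \<in> T \<inter> sphere 0 1 \<Longrightarrow> gnorm g q u \<le> gnorm g q w"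
      using continuous_attains_inf[OF _ False continuous_on_subset[OF cont]] by blast
    have "0 < gnorm g q u" using u(1) by (intro gnorm_pos) auto
    moreover have "gnorm g q u * norm v \<le> gnorm g q v" if "v \<in> T" for v
    proof (cases "v = 0")
      case False
      have "v /\<^sub>R norm v \<in> T \<inter> sphere 0 1"
        using that False form_subspace by (simp add: subspace_scale)
      then have "gnorm g q u \<le> gnorm g q (v /\<^sub>R norm v)"
        by (rule u(2))
      moreover have "gnorm g q v = norm v * gnorm g q (v /\<^sub>R norm v)"
        using gnorm_scaleR[where g=g and q=q, OF form_bilinear, of "norm v" "v /\<^sub>R norm v"] False
        by simp
      ultimately show ?thesis
        using mult_left_mono[of "gnorm g q u" "gnorm g q (v /\<^sub>R norm v)" "norm v"]
        by (simp add: ac_simps)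
    qed (simp add: gnorm_def form_bilinear bilinear_lzero)
    ultimately show thesis by (rule that)
  qed
qed

text \<open>Equivalence of norms on the finite-dimensional space \<open>E\<close>, on which \<open>P\<close> is injective.\<close>

lemma gnorm_ratio_bound:
  fixes L P :: "'a \<Rightarrow> 'a"
  assumes E: "subspace E" and L: "linear L" and P: "linear P" "P ` E \<subseteq> T"
    and P_inj: "\<And>v. v \<in> E \<Longrightarrow> P v = 0 \<Longrightarrow> v = 0"
  obtains B where "B \<ge> 0" "\<And>v. v \<in> E \<Longrightarrow> gnorm g q (L v) \<le> B * gnorm g q (P v)"
proof -
  obtain K where K: "K \<ge> 0" "\<And>v. gnorm g q v \<le> K * norm v"
    using gnorm_le_norm[where g=g and q=q, OF form_bilinear] by blast
  obtain KL where KL: "KL > 0" "\<And>v. norm (L v) \<le> norm v * KL"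
    using L bounded_linear.pos_bounded unfolding linear_conv_bounded_linear by blast
  obtain e where e: "e > 0" "\<And>v. v \<in> E \<Longrightarrow> e * norm v \<le> norm (P v)"
    using injective_imp_isometric[OF closed_subspace[OF E] E, of P] P_inj P(1)
    unfolding linear_conv_bounded_linear by blast
  obtain c where c: "c > 0" "\<And>v. v \<in> T \<Longrightarrow> c * norm v \<le> gnorm g q v"
    using gnorm_ge_norm by blast
  have "gnorm g q (L v) \<le> (K * KL / (e * c)) * gnorm g q (P v)" if v: "v \<in> E" for v
  proof -
    have "c * (e * norm v) \<le> c * norm (P v)"
      using e(2)[OF v] c(1) by (simp add: mult_left_mono)
    also have "\<dots> \<le> gnorm g q (P v)"
      using c(2) P(2) v by blast
    finally have v_le: "norm v \<le> gnorm g q (P v) / (e * c)"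
      using e(1) c(1) by (simp add: pos_le_divide_eq ac_simps)
    have "gnorm g q (L v) \<le> K * KL * norm v"
      using K(2)[of "L v"] mult_left_mono[OF KL(2)[of v] K(1)] by (simp add: ac_simps)
    also have "\<dots> \<le> K * KL * (gnorm g q (P v) / (e * c))"
      using mult_left_mono[OF v_le, of "K * KL"] K(1) KL(1) by simp
    finally show ?thesis by simp
  qed
  moreover have "K * KL / (e * c) \<ge> 0"
    using K(1) KL(1) e(1) c(1) by simp
  ultimately show thesis using that by blast
qed

end

section \<open>Angles between iterated subspaces\<close>

definition angle_from :: "('a::euclidean_space \<Rightarrow> 'a \<Rightarrow> 'a \<Rightarrow> real) \<Rightarrow> 'a \<Rightarrow> 'a set \<Rightarrow> 'a set \<Rightarrow> real" where
  "angle_from g q E F = Sup ({Inf {vec_angle g q v w | w. w \<in> F - {0}} | v. v \<in> E - {0}} \<union> {0})"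

lemma subspace_angle_eq_max: "subspace_angle g q E F = max (angle_from g q E F) (angle_from g q F E)"
  unfolding subspace_angle_def angle_from_def ..

lemma angle_from_bounds:
  assumes "0 \<le> e"
    and close: "\<And>v. v \<in> E - {0} \<Longrightarrow> \<exists>w\<in>F - {0}. vec_angle g q v w \<le> e"
    and nonneg: "\<And>v w. v \<in> E - {0} \<Longrightarrow> w \<in> F - {0} \<Longrightarrow> 0 \<le> vec_angle g q v w"
  shows "0 \<le> angle_from g q E F" "angle_from g q E F \<le> e"
proof -
  define A where "A = {Inf {vec_angle g q v w | w. w \<in> F - {0}} | v. v \<in> E - {0}} \<union> {0}"
  have A: "0 \<le> a \<and> a \<le> e" if a_mem: "a \<in> A" for a
  proof (cases "a = 0")
    case False
    then obtain v where v: "v \<in> E - {0}" and a: "a = Inf {vec_angle g q v w | w. w \<in> F - {0}}"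
      using a_mem unfolding A_def by blast
    obtain w where w: "w \<in> F - {0}" "vec_angle g q v w \<le> e"
      using close[OF v] by blast
    have "bdd_below {vec_angle g q v w | w. w \<in> F - {0}}"
      using nonneg[OF v] by (auto intro!: bdd_belowI[of _ 0])
    then have "a \<le> vec_angle g q v w"
      unfolding a using w(1) by (intro cInf_lower) auto
    moreover have "0 \<le> a"
      unfolding a using w(1) nonneg[OF v] by (intro cInf_greatest) auto
    ultimately show ?thesis using w(2) by simp
  qed (use \<open>0 \<le> e\<close> in simp)
  have "bdd_above A"
    using A by (intro bdd_aboveI[where M = e]) blast
  then show "0 \<le> angle_from g q E F"
    unfolding angle_from_def A_def[symmetric] by (intro cSup_upper2[of 0]) (auto simp: A_def)
  show "angle_from g q E F \<le> e"
    unfolding angle_from_def A_def[symmetric] using A by (intro cSup_least) (auto simp: A_def)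
qed

context inner_form
begin

lemma vec_angle_nonneg:
  assumes "v \<in> T" "w \<in> T" "v \<noteq> 0" "w \<noteq> 0"
  shows "0 \<le> vec_angle g q v w"
proof -
  have pos: "0 < gnorm g q v * gnorm g q w"
    using assms by (simp add: gnorm_pos)
  have "- (gnorm g q v * gnorm g q w) \<le> g q v w" "g q v w \<le> gnorm g q v * gnorm g q w"
    using form_cauchy_schwarz[OF assms(1,2)] by (simp_all add: abs_le_iff)
  then show ?thesis
    unfolding vec_angle_def using pos
    by (intro arccos_lbound) (simp_all add: le_divide_eq divide_le_eq)
qed

lemma vec_angle_le_arccos:
  assumes a: "a \<in> T" and y: "y \<in> T" "y \<noteq> 0"
    and close: "gnorm g q (a - y) \<le> e * gnorm g q y" and e: "0 \<le> e" "e < 1"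
  shows "vec_angle g q a y \<le> arccos ((1 - e) / (1 + e))"
proof -
  define x where "x = a - y"
  have x: "x \<in> T" using a y form_subspace by (simp add: x_def subspace_diff)
  have a_eq: "a = x + y" by (simp add: x_def)
  have ny: "0 < gnorm g q y" using y by (rule gnorm_pos)
  have nx: "gnorm g q x \<le> e * gnorm g q y" using close by (simp add: x_def)
  have "gnorm g q x * gnorm g q y \<le> e * (gnorm g q y)\<^sup>2"
    using mult_right_mono[OF nx less_imp_le[OF ny]] by (simp add: power2_eq_square)
  then have "- g q x y \<le> e * (gnorm g q y)\<^sup>2"
    using form_cauchy_schwarz[OF x y(1)] by linarith
  then have inner_ge: "(1 - e) * (gnorm g q y)\<^sup>2 \<le> g q a y"
    using form_bilinear y(1) by (simp add: a_eq bilinear_ladd gnorm_square algebra_simps)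
  have na_le: "gnorm g q a \<le> (1 + e) * gnorm g q y"
    using gnorm_triangle[OF x y(1)] nx by (simp add: a_eq algebra_simps)
  have "gnorm g q y \<le> gnorm g q a + gnorm g q x"
    using gnorm_diff_le[OF a x] by (simp add: x_def)
  then have na: "0 < gnorm g q a"
    using nx ny e mult_strict_right_mono[OF e(2) ny] by linarith
  define r where "r = g q a y / (gnorm g q a * gnorm g q y)"
  have "r \<le> 1"
    using form_cauchy_schwarz[OF a y(1)] na ny by (simp add: r_def)
  have "(1 - e) / (1 + e) = (1 - e) * (gnorm g q y)\<^sup>2 / ((1 + e) * gnorm g q y * gnorm g q y)"
    using ny by (simp add: power2_eq_square)
  also have "\<dots> \<le> g q a y / ((1 + e) * gnorm g q y * gnorm g q y)"
    using inner_ge ny e by (intro divide_right_mono) auto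
  also have "\<dots> \<le> r"
    unfolding r_def using inner_ge na ny na_le e
    by (intro divide_left_mono mult_right_mono) (auto intro: order_trans[rotated])
  finally have "(1 - e) / (1 + e) \<le> r" .
  moreover have "-1 \<le> (1 - e) / (1 + e)" using e by (simp add: field_simps)
  ultimately show ?thesis
    unfolding vec_angle_def r_def[symmetric] using \<open>r \<le> 1\<close> by (intro arccos_le_arccos)
qed

lemma angle_from_le_arccos:
  assumes ET: "E \<subseteq> T" and FT: "F \<subseteq> T" and e: "0 \<le> e" "e < 1"
    and close: "\<And>v. v \<in> E - {0} \<Longrightarrow> \<exists>w\<in>F - {0}. gnorm g q (v - w) \<le> e * gnorm g q w"
  shows "0 \<le> angle_from g q E F" "angle_from g q E F \<le> arccos ((1 - e) / (1 + e))"
proof -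
  have close_angle: "\<exists>w\<in>F - {0}. vec_angle g q v w \<le> arccos ((1 - e) / (1 + e))"
    if v: "v \<in> E - {0}" for v
  proof -
    obtain w where w: "w \<in> F - {0}" "gnorm g q (v - w) \<le> e * gnorm g q w"
      using close[OF v] by blast
    have "vec_angle g q v w \<le> arccos ((1 - e) / (1 + e))"
      using w ET FT v by (intro vec_angle_le_arccos e) auto
    then show ?thesis using w(1) by blast
  qed
  have arccos_nonneg: "0 \<le> arccos ((1 - e) / (1 + e))"
    using e by (intro arccos_lbound) (simp_all add: field_simps)
  have angle_nonneg: "0 \<le> vec_angle g q v w" if "v \<in> E - {0}" "w \<in> F - {0}" for v w
    using that ET FT by (intro vec_angle_nonneg) auto
  show "0 \<le> angle_from g q E F" "angle_from g q E F \<le> arccos ((1 - e) / (1 + e))"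
    using angle_from_bounds[OF arccos_nonneg close_angle angle_nonneg] by auto
qed

end

lemma angle_from_tendsto_0:
  fixes g :: "'a::euclidean_space \<Rightarrow> 'a \<Rightarrow> 'a \<Rightarrow> real"
  assumes forms: "\<And>n. inner_form g (q n) (T n)"
    and "\<And>n. E n \<subseteq> T n" "\<And>n. F n \<subseteq> T n" and \<epsilon>: "\<epsilon> \<longlonglongrightarrow> 0"
    and close: "\<And>n v. v \<in> E n - {0} \<Longrightarrow> \<exists>w\<in>F n - {0}. gnorm g (q n) (v - w) \<le> \<epsilon> n * gnorm g (q n) w"
  shows "(\<lambda>n. angle_from g (q n) (E n) (F n)) \<longlonglongrightarrow> 0"
proof -
  define b where "b n = arccos ((1 - \<bar>\<epsilon> n\<bar>) / (1 + \<bar>\<epsilon> n\<bar>))" for n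
  have bounds: "0 \<le> angle_from g (q n) (E n) (F n) \<and> angle_from g (q n) (E n) (F n) \<le> b n"
    if small: "\<bar>\<epsilon> n\<bar> < 1" for n
  proof -
    have close_abs: "\<exists>w\<in>F n - {0}. gnorm g (q n) (v - w) \<le> \<bar>\<epsilon> n\<bar> * gnorm g (q n) w"
      if v: "v \<in> E n - {0}" for v
    proof -
      obtain w where w: "w \<in> F n - {0}" "gnorm g (q n) (v - w) \<le> \<epsilon> n * gnorm g (q n) w"
        using close[OF v] by blast
      have "0 \<le> gnorm g (q n) w"
        using w(1) assms(3) by (intro inner_form.gnorm_nonneg[OF forms]) auto
      then have "\<epsilon> n * gnorm g (q n) w \<le> \<bar>\<epsilon> n\<bar> * gnorm g (q n) w"
        by (simp add: mult_right_mono)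
      then show ?thesis using w(1) order_trans[OF w(2)] by blast
    qed
    then show ?thesis
      unfolding b_def
      using inner_form.angle_from_le_arccos[OF forms assms(2,3) abs_ge_zero small close_abs]
      by simp
  qed
  have abs_\<epsilon>: "(\<lambda>n. \<bar>\<epsilon> n\<bar>) \<longlonglongrightarrow> 0"
    using tendsto_rabs[OF \<epsilon>] by simp
  then have "\<forall>\<^sub>F n in sequentially. \<bar>\<epsilon> n\<bar> < 1"
    by (rule order_tendstoD(2)) simp
  then have lower: "\<forall>\<^sub>F n in sequentially. 0 \<le> angle_from g (q n) (E n) (F n)"
    and upper: "\<forall>\<^sub>F n in sequentially. angle_from g (q n) (E n) (F n) \<le> b n"
    using bounds by (auto elim: eventually_mono)
  have "b \<longlonglongrightarrow> arccos 1"
    unfolding b_def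
  proof (rule continuous_on_tendsto_compose[OF continuous_on_arccos'])
    show "(\<lambda>n. (1 - \<bar>\<epsilon> n\<bar>) / (1 + \<bar>\<epsilon> n\<bar>)) \<longlonglongrightarrow> 1"
      using tendsto_divide[OF tendsto_diff[OF tendsto_const abs_\<epsilon>] tendsto_add[OF tendsto_const abs_\<epsilon>],
          of 1 1]
      by simp
    show "\<forall>\<^sub>F n in sequentially. (1 - \<bar>\<epsilon> n\<bar>) / (1 + \<bar>\<epsilon> n\<bar>) \<in> {-1..1}"
    proof (intro always_eventually allI)
      fix n
      have "0 < 1 + \<bar>\<epsilon> n\<bar>" by simp
      then show "(1 - \<bar>\<epsilon> n\<bar>) / (1 + \<bar>\<epsilon> n\<bar>) \<in> {-1..1}"
        by (simp add: divide_le_eq le_divide_eq)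
    qed
  qed simp
  then have "b \<longlonglongrightarrow> 0" by simp
  then show ?thesis
    by (rule tendsto_sandwich[OF lower upper tendsto_const])
qed

definition shadowed_by ::
  "('a::euclidean_space \<Rightarrow> 'a \<Rightarrow> 'a \<Rightarrow> real) \<Rightarrow> (nat \<Rightarrow> 'a) \<Rightarrow> (nat \<Rightarrow> 'a \<Rightarrow> 'a) \<Rightarrow> real
    \<Rightarrow> 'a set \<Rightarrow> 'a set \<Rightarrow> bool" where
  "shadowed_by g q D \<rho> E F \<longleftrightarrow> (\<exists>K. \<forall>v\<in>E - {0}. \<exists>w\<in>F - {0}.
     \<forall>n. gnorm g (q n) (D n v - D n w) \<le> K * \<rho> ^ n * gnorm g (q n) (D n w))"

lemma angle_from_tendsto_0_if_shadowed:
  fixes D :: "nat \<Rightarrow> 'a::euclidean_space \<Rightarrow> 'a"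
  assumes forms: "\<And>n. inner_form g (q n) (T n)"
    and D: "\<And>n. linear (D n)" "\<And>n. D n ` E \<subseteq> T n" "\<And>n. D n ` F \<subseteq> T n"
    and D_inj: "\<And>n w. w \<in> F \<Longrightarrow> w \<noteq> 0 \<Longrightarrow> D n w \<noteq> 0"
    and \<rho>: "0 \<le> \<rho>" "\<rho> < 1"
    and shadowed: "shadowed_by g q D \<rho> E F"
  shows "(\<lambda>n. angle_from g (q n) (D n ` E) (D n ` F)) \<longlonglongrightarrow> 0"
proof -
  obtain K where K: "\<And>v. v \<in> E - {0} \<Longrightarrow> \<exists>w\<in>F - {0}.
      \<forall>n. gnorm g (q n) (D n v - D n w) \<le> K * \<rho> ^ n * gnorm g (q n) (D n w)"
    using shadowed unfolding shadowed_by_def by blast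
  show ?thesis
  proof (rule angle_from_tendsto_0[where \<epsilon> = "\<lambda>n. K * \<rho> ^ n", OF forms D(2,3)])
    show "(\<lambda>n. K * \<rho> ^ n) \<longlonglongrightarrow> 0"
      using \<rho> by (intro tendsto_mult_right_zero LIMSEQ_power_zero) simp
    fix n v'
    assume "v' \<in> D n ` E - {0}"
    then obtain v where v: "v \<in> E - {0}" and v': "v' = D n v"
      using linear_0[OF D(1)] by force
    obtain w where w: "w \<in> F - {0}"
      and close: "gnorm g (q n) (D n v - D n w) \<le> K * \<rho> ^ n * gnorm g (q n) (D n w)"
      using K[OF v] by blast
    have "D n w \<in> D n ` F - {0}"
      using w D_inj by blast
    then show "\<exists>w'\<in>D n ` F - {0}. gnorm g (q n) (v' - w') \<le> K * \<rho> ^ n * gnorm g (q n) w'"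
      using close v' by blast
  qed
qed

section \<open>Iterated derivative along one splitting\<close>

lemma linear_Dfn: "linear (Dfn f f' p n)"
proof (induction n)
  case 0
  show ?case by (rule linearI) simp_all
next
  case (Suc n)
  show ?case
    by (rule linearI)
      (simp_all add: linear_add[OF Suc] linear_scale[OF Suc] blinfun.add_right blinfun.scaleR_right)
qed

lemmas Dfn_add = linear_add[OF linear_Dfn]
  and Dfn_diff = linear_diff[OF linear_Dfn]

lemma le_0_if_le_geometric:
  fixes a K \<rho> :: real
  assumes "\<And>n. a \<le> K * \<rho> ^ n" "0 \<le> \<rho>" "\<rho> < 1"
  shows "a \<le> 0"
proof -
  have "(\<lambda>n. K * \<rho> ^ n) \<longlonglongrightarrow> 0"
    using assms(2,3) by (intro tendsto_mult_right_zero LIMSEQ_power_zero) simp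
  then show ?thesis
    by (rule LIMSEQ_le_const) (use assms(1) in blast)
qed

locale ph_orbit =
  fixes M :: "'a::euclidean_space set" and f :: "'a \<Rightarrow> 'a" and f' :: "'a \<Rightarrow> 'a \<Rightarrow>\<^sub>L 'a"
    and g :: "'a \<Rightarrow> 'a \<Rightarrow> 'a \<Rightarrow> real" and \<nu> \<gamma>1 \<gamma>2 \<mu> C :: real
    and x :: "int \<Rightarrow> 'a" and Es Ec Eu :: "int \<Rightarrow> 'a set"
  assumes ph: "partially_hyperbolic M f f' g \<nu> \<gamma>1 \<gamma>2 \<mu> C"
    and orbit: "is_orbit M f x"
    and splitting: "ph_splitting M f f' g \<nu> \<gamma>1 \<gamma>2 \<mu> C x Es Ec Eu"
begin

lemma rates: "0 < \<nu>" "\<nu> < \<gamma>1" "\<gamma>1 \<le> \<gamma>2" "\<gamma>2 < \<mu>" "\<nu> < 1" "1 < \<mu>" "1 < C"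
  using ph unfolding partially_hyperbolic_def by auto

lemma x_int: "x (int n) = (f ^^ n) (x 0)"
proof (induction n)
  case (Suc n)
  have "x (int (Suc n)) = f (x (int n))"
    using orbit unfolding is_orbit_def by (metis of_nat_Suc add.commute)
  then show ?case using Suc by simp
qed simp

lemma splitting_at:
  "subspace (Es n) \<and> subspace (Ec n) \<and> subspace (Eu n) \<and>
   {a + b + c | a b c. a \<in> Es n \<and> b \<in> Ec n \<and> c \<in> Eu n} = tangent_space M (x n) \<and>
   (\<forall>a b c. a \<in> Es n \<longrightarrow> b \<in> Ec n \<longrightarrow> c \<in> Eu n \<longrightarrow> a + b + c = 0 \<longrightarrow>
      a = 0 \<and> b = 0 \<and> c = 0) \<and>
   blinfun_apply (f' (x n)) ` Es n = Es (n + 1) \<and>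
   blinfun_apply (f' (x n)) ` Ec n = Ec (n + 1) \<and>
   blinfun_apply (f' (x n)) ` Eu n = Eu (n + 1)"
  using splitting unfolding ph_splitting_def by (rule conjunct1[THEN spec])

lemma bundles_subspace: "subspace (Es n)" "subspace (Ec n)" "subspace (Eu n)"
  using splitting_at by simp_all

lemma bundles_direct:
  "a \<in> Es n \<Longrightarrow> b \<in> Ec n \<Longrightarrow> c \<in> Eu n \<Longrightarrow> a + b + c = 0 \<Longrightarrow> a = 0 \<and> b = 0 \<and> c = 0"
  using splitting_at[of n, THEN conjunct2, THEN conjunct2, THEN conjunct2, THEN conjunct2, THEN conjunct1]
  by blast

lemma tangent_space_split:
  "tangent_space M (x n) = {a + b + c | a b c. a \<in> Es n \<and> b \<in> Ec n \<and> c \<in> Eu n}"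
  using splitting_at by simp

lemma bundles_subset_tangent:
  "Es n \<subseteq> tangent_space M (x n)" "Ec n \<subseteq> tangent_space M (x n)" "Eu n \<subseteq> tangent_space M (x n)"
proof -
  have "0 \<in> Es n" "0 \<in> Ec n" "0 \<in> Eu n"
    using bundles_subspace subspace_0 by blast+
  moreover have "v = v + 0 + 0" "v = 0 + v + 0" "v = 0 + 0 + v" for v :: 'a
    by simp_all
  ultimately show "Es n \<subseteq> tangent_space M (x n)" "Ec n \<subseteq> tangent_space M (x n)"
      "Eu n \<subseteq> tangent_space M (x n)"
    unfolding tangent_space_split by blast+
qed

lemma tangent_form: "inner_form g ((f ^^ n) (x 0)) (tangent_space M ((f ^^ n) (x 0)))"
proof -
  have "subspace {y + c | y c. y \<in> {a + b | a b. a \<in> Es n \<and> b \<in> Ec n} \<and> c \<in> Eu n}"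
    for n using bundles_subspace by (intro subspace_sums)
  moreover have "{y + c | y c. y \<in> {a + b | a b. a \<in> Es n \<and> b \<in> Ec n} \<and> c \<in> Eu n}
      = tangent_space M (x n)" for n
    unfolding tangent_space_split by blast
  moreover have "x n \<in> M" for n
    using orbit unfolding is_orbit_def by blast
  moreover have "riemannian_metric M g"
    using ph unfolding partially_hyperbolic_def by blast
  ultimately show ?thesis
    unfolding x_int[symmetric] riemannian_metric_def by unfold_locales auto
qed

lemma tangent_form_0: "inner_form g (x 0) (tangent_space M (x 0))"
  using tangent_form[of 0] by simp

lemma Dfn_mem_invariant:
  assumes inv: "\<And>k. blinfun_apply (f' (x k)) ` E k = E (k + 1)" and v: "v \<in> E 0"
  shows "Dfn f f' (x 0) n v \<in> E (int n)"
proof (induction n)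
  case (Suc n)
  have "Dfn f f' (x 0) (Suc n) v = blinfun_apply (f' (x (int n))) (Dfn f f' (x 0) n v)"
    by (simp add: x_int)
  also have "\<dots> \<in> E (int n + 1)"
    using inv Suc by blast
  finally show ?case by (simp add: add.commute)
qed (simp add: v)

lemma Dfn_in_bundles:
  "v \<in> Es 0 \<Longrightarrow> Dfn f f' (x 0) n v \<in> Es (int n)"
  "v \<in> Ec 0 \<Longrightarrow> Dfn f f' (x 0) n v \<in> Ec (int n)"
  "v \<in> Eu 0 \<Longrightarrow> Dfn f f' (x 0) n v \<in> Eu (int n)"
  using splitting_at by (blast intro: Dfn_mem_invariant)+

lemma Dfn_in_tangent:
  "v \<in> Es 0 \<Longrightarrow> Dfn f f' (x 0) n v \<in> tangent_space M ((f ^^ n) (x 0))"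
  "v \<in> Ec 0 \<Longrightarrow> Dfn f f' (x 0) n v \<in> tangent_space M ((f ^^ n) (x 0))"
  "v \<in> Eu 0 \<Longrightarrow> Dfn f f' (x 0) n v \<in> tangent_space M ((f ^^ n) (x 0))"
  using Dfn_in_bundles bundles_subset_tangent[of "int n"] by (auto simp: x_int)

lemma
  shows stable_upper_bound:
    "v \<in> Es 0 \<Longrightarrow> gnorm g ((f ^^ n) (x 0)) (Dfn f f' (x 0) n v) \<le> C * \<nu> ^ n * gnorm g (x 0) v"
  and center_lower_bound:
    "v \<in> Ec 0 \<Longrightarrow> inverse C * \<gamma>1 ^ n * gnorm g (x 0) v \<le> gnorm g ((f ^^ n) (x 0)) (Dfn f f' (x 0) n v)"
  and center_upper_bound:
    "v \<in> Ec 0 \<Longrightarrow> gnorm g ((f ^^ n) (x 0)) (Dfn f f' (x 0) n v) \<le> C * \<gamma>2 ^ n * gnorm g (x 0) v"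
  and unstable_lower_bound:
    "v \<in> Eu 0 \<Longrightarrow> inverse C * \<mu> ^ n * gnorm g (x 0) v \<le> gnorm g ((f ^^ n) (x 0)) (Dfn f f' (x 0) n v)"
  using splitting[unfolded ph_splitting_def, THEN conjunct2, rule_format, of 0 n]
  by (simp_all add: x_int)

lemma unstable_eq_0_if_slow:
  assumes u: "u \<in> Eu 0" and slow: "\<And>n. gnorm g ((f ^^ n) (x 0)) (Dfn f f' (x 0) n u) \<le> K * \<gamma>2 ^ n"
  shows "u = 0"
proof -
  have "gnorm g (x 0) u \<le> (C * K) * (\<gamma>2 / \<mu>) ^ n" for n
  proof -
    have "inverse C * \<mu> ^ n * gnorm g (x 0) u \<le> K * \<gamma>2 ^ n"
      using unstable_lower_bound[OF u] slow by (rule order_trans)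
    then show ?thesis using rates by (simp add: field_simps power_divide)
  qed
  then have "gnorm g (x 0) u \<le> 0"
    by (rule le_0_if_le_geometric) (use rates in \<open>simp_all add: divide_less_eq\<close>)
  then show ?thesis
    using u bundles_subset_tangent(3)[of 0] inner_form.gnorm_nonneg[OF tangent_form_0]
      inner_form.gnorm_eq_0_iff[OF tangent_form_0]
    by force
qed

lemma stable_eq_0_if_fast:
  assumes v: "v \<in> Es 0" and c: "c > 0"
    and fast: "\<And>n. c * \<gamma>1 ^ n * gnorm g (x 0) v \<le> gnorm g ((f ^^ n) (x 0)) (Dfn f f' (x 0) n v)"
  shows "v = 0"
proof -
  have "gnorm g (x 0) v \<le> (C / c * gnorm g (x 0) v) * (\<nu> / \<gamma>1) ^ n" for n
  proof -
    have "c * \<gamma>1 ^ n * gnorm g (x 0) v \<le> C * \<nu> ^ n * gnorm g (x 0) v"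
      using fast stable_upper_bound[OF v] by (rule order_trans)
    then show ?thesis using rates c by (simp add: field_simps power_divide)
  qed
  then have "gnorm g (x 0) v \<le> 0"
    by (rule le_0_if_le_geometric) (use rates in \<open>simp_all add: divide_less_eq\<close>)
  then show ?thesis
    using v bundles_subset_tangent(1)[of 0] inner_form.gnorm_nonneg[OF tangent_form_0]
      inner_form.gnorm_eq_0_iff[OF tangent_form_0]
    by force
qed

lemma bundle_projections:
  obtains ps pc pu where "linear ps" "linear pc" "linear pu"
    "\<And>v. ps v \<in> Es 0" "\<And>v. pc v \<in> Ec 0" "\<And>v. pu v \<in> Eu 0"
    "\<And>v. v \<in> tangent_space M (x 0) \<Longrightarrow> v = ps v + pc v + pu v"
proof -
  define \<sigma> :: "'a \<times> 'a \<times> 'a \<Rightarrow> 'a" where "\<sigma> = (\<lambda>(a, b, c). a + b + c)"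
  have lin: "linear \<sigma>"
    by (rule linearI) (auto simp: \<sigma>_def split_beta algebra_simps scaleR_add_right)
  have sub: "subspace (Es 0 \<times> Ec 0 \<times> Eu 0)"
    by (intro subspace_Times bundles_subspace)
  have inj: "inj_on \<sigma> (Es 0 \<times> Ec 0 \<times> Eu 0)"
  proof (rule inj_onI)
    fix y y'
    assume mem: "y \<in> Es 0 \<times> Ec 0 \<times> Eu 0" "y' \<in> Es 0 \<times> Ec 0 \<times> Eu 0" and eq: "\<sigma> y = \<sigma> y'"
    obtain a b c where y: "y = (a, b, c)" by (rule prod_cases3)
    obtain a' b' c' where y': "y' = (a', b', c')" by (rule prod_cases3)
    have "a - a' \<in> Es 0" "b - b' \<in> Ec 0" "c - c' \<in> Eu 0"
      using mem by (simp_all add: y y' subspace_diff bundles_subspace)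
    moreover have "(a - a') + (b - b') + (c - c') = 0"
      using eq by (simp add: \<sigma>_def y y' algebra_simps)
    ultimately have "a - a' = 0 \<and> b - b' = 0 \<and> c - c' = 0"
      by (rule bundles_direct)
    then show "y = y'" by (simp add: y y')
  qed
  obtain \<pi> where \<pi>: "range \<pi> \<subseteq> Es 0 \<times> Ec 0 \<times> Eu 0" "linear \<pi>"
    "\<forall>y\<in>Es 0 \<times> Ec 0 \<times> Eu 0. \<pi> (\<sigma> y) = y"
    using linear_exists_left_inverse_on[OF lin sub inj] by blast
  show thesis
  proof (rule that)
    show "linear (\<lambda>v. fst (\<pi> v))" "linear (\<lambda>v. fst (snd (\<pi> v)))" "linear (\<lambda>v. snd (snd (\<pi> v)))"
      using linear_compose[OF \<pi>(2) linear_fst] linear_compose[OF \<pi>(2) linear_snd]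
        linear_compose[OF linear_compose[OF \<pi>(2) linear_snd] linear_fst]
        linear_compose[OF linear_compose[OF \<pi>(2) linear_snd] linear_snd]
      by (simp_all add: o_def)
    show "fst (\<pi> v) \<in> Es 0" "fst (snd (\<pi> v)) \<in> Ec 0" "snd (snd (\<pi> v)) \<in> Eu 0" for v
      using subsetD[OF \<pi>(1) rangeI, of v] by (simp_all add: mem_Times_iff)
    show "v = fst (\<pi> v) + fst (snd (\<pi> v)) + snd (snd (\<pi> v))" if v: "v \<in> tangent_space M (x 0)" for v
    proof -
      obtain a b c where "v = a + b + c" "a \<in> Es 0" "b \<in> Ec 0" "c \<in> Eu 0"
        using v unfolding tangent_space_split by blast
      then show ?thesis using \<pi>(3) by (simp add: \<sigma>_def)
    qed
  qed
qed

lemma Dfn_tangent: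
  assumes "v \<in> tangent_space M (x 0)"
  shows "Dfn f f' (x 0) n v \<in> tangent_space M ((f ^^ n) (x 0))"
proof -
  obtain a b c where abc: "v = a + b + c" "a \<in> Es 0" "b \<in> Ec 0" "c \<in> Eu 0"
    using assms unfolding tangent_space_split by blast
  then have "Dfn f f' (x 0) n v = Dfn f f' (x 0) n a + Dfn f f' (x 0) n b + Dfn f f' (x 0) n c"
    by (simp add: Dfn_add)
  then show ?thesis
    using abc Dfn_in_tangent inner_form.form_subspace[OF tangent_form] by (simp add: subspace_add)
qed

lemma Dfn_eq_0_iff:
  assumes v: "v \<in> tangent_space M (x 0)"
  shows "Dfn f f' (x 0) n v = 0 \<longleftrightarrow> v = 0"
proof (induction n)
  case (Suc n)
  let ?y = "(f ^^ n) (x 0)"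
  have "?y \<in> M"
    using orbit x_int[of n] unfolding is_orbit_def by metis
  then have "inj_on (blinfun_apply (f' ?y)) (tangent_space M ?y)"
    using ph unfolding partially_hyperbolic_def C1_local_diffeo_def by (blast dest: bij_betw_imp_inj_on)
  moreover have "Dfn f f' (x 0) n v \<in> tangent_space M ?y" "0 \<in> tangent_space M ?y"
    using Dfn_tangent[OF v] inner_form.form_subspace[OF tangent_form] subspace_0 by blast+
  ultimately have "blinfun_apply (f' ?y) (Dfn f f' (x 0) n v) = 0 \<longleftrightarrow> Dfn f f' (x 0) n v = 0"
    by (metis blinfun.zero_right inj_on_eq_iff)
  then show ?case using Suc by simp
qed simp

lemma stable_center_upper_bound:
  assumes a: "a \<in> Es 0" and b: "b \<in> Ec 0"
  shows "gnorm g ((f ^^ n) (x 0)) (Dfn f f' (x 0) n (a + b))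
    \<le> C * \<gamma>2 ^ n * (gnorm g (x 0) a + gnorm g (x 0) b)"
proof -
  have "C * \<nu> ^ n * gnorm g (x 0) a \<le> C * \<gamma>2 ^ n * gnorm g (x 0) a"
    using rates a bundles_subset_tangent(1)[of 0]
    by (intro mult_right_mono mult_left_mono power_mono inner_form.gnorm_nonneg[OF tangent_form_0]) auto
  moreover have "gnorm g ((f ^^ n) (x 0)) (Dfn f f' (x 0) n (a + b))
      \<le> gnorm g ((f ^^ n) (x 0)) (Dfn f f' (x 0) n a) + gnorm g ((f ^^ n) (x 0)) (Dfn f f' (x 0) n b)"
    using inner_form.gnorm_triangle[OF tangent_form Dfn_in_tangent(1)[OF a] Dfn_in_tangent(2)[OF b]]
    by (simp add: Dfn_add)
  ultimately show ?thesis
    using stable_upper_bound[OF a, of n] center_upper_bound[OF b, of n] by (simp add: algebra_simps)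
qed

end

section \<open>Two splittings at the same point\<close>

text \<open>
  Since \<open>f\<close> need not be invertible, the two orbits may differ in the past; they share the
  forward orbit of \<open>x1 0 = x2 0\<close>, along which all estimates are taken.
\<close>

locale ph_orbit_pair =
  o1: ph_orbit M f f' g \<nu> \<gamma>1 \<gamma>2 \<mu> C x1 Es1 Ec1 Eu1 +
  o2: ph_orbit M f f' g \<nu> \<gamma>1 \<gamma>2 \<mu> C x2 Es2 Ec2 Eu2
  for M f f' g \<nu> \<gamma>1 \<gamma>2 \<mu> C x1 Es1 Ec1 Eu1 x2 Es2 Ec2 Eu2 +
  assumes same_base: "x2 0 = x1 0"
begin

lemma swap_orbits: "ph_orbit_pair M f f' g \<nu> \<gamma>1 \<gamma>2 \<mu> C x2 Es2 Ec2 Eu2 x1 Es1 Ec1 Eu1"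
  using same_base by unfold_locales simp

lemma center_no_unstable_component:
  assumes v: "v \<in> Ec2 0" and abc: "a \<in> Es1 0" "b \<in> Ec1 0" "c \<in> Eu1 0" "v = a + b + c"
  shows "c = 0"
proof (rule o1.unstable_eq_0_if_slow[OF abc(3)])
  fix n
  let ?q = "(f ^^ n) (x1 0)" and ?D = "Dfn f f' (x1 0) n"
  have "a + b \<in> tangent_space M (x1 0)"
    using abc o1.bundles_subset_tangent[of 0] o1.bundles_subspace
      inner_form.form_subspace[OF o1.tangent_form_0] by (auto intro: subspace_add)
  moreover have "?D c = ?D v - ?D (a + b)"
    using abc(4) by (simp add: Dfn_add Dfn_diff)
  ultimately have "gnorm g ?q (?D c) \<le> gnorm g ?q (?D v) + gnorm g ?q (?D (a + b))"
    using o2.Dfn_in_tangent(2)[OF v] same_base o1.Dfn_tangent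
    by (simp add: inner_form.gnorm_diff_le[OF o1.tangent_form])
  also have "\<dots> \<le> C * \<gamma>2 ^ n * gnorm g (x1 0) v + C * \<gamma>2 ^ n * (gnorm g (x1 0) a + gnorm g (x1 0) b)"
    using o2.center_upper_bound[OF v, of n] o1.stable_center_upper_bound[OF abc(1,2), of n] same_base
    by simp
  finally show "gnorm g ?q (?D c) \<le> C * (gnorm g (x1 0) v + gnorm g (x1 0) a + gnorm g (x1 0) b) * \<gamma>2 ^ n"
    by (simp add: algebra_simps)
qed

lemma center_inter_stable: "v \<in> Ec2 0 \<Longrightarrow> v \<in> Es1 0 \<Longrightarrow> v = 0"
  using o2.center_lower_bound same_base o1.rates
  by (intro o1.stable_eq_0_if_fast[of v "inverse C"]) auto

lemma unstable_inter_stable_center: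
  assumes v: "v \<in> Eu2 0" and ab: "a \<in> Es1 0" "b \<in> Ec1 0" "v = a + b"
  shows "v = 0"
  using o1.stable_center_upper_bound[OF ab(1,2)] same_base ab(3)
  by (intro o2.unstable_eq_0_if_slow[OF v, of "C * (gnorm g (x1 0) a + gnorm g (x1 0) b)"])
    (simp add: algebra_simps)

lemma center_shadowed:
  "shadowed_by g (\<lambda>n. (f ^^ n) (x1 0)) (Dfn f f' (x1 0)) (\<nu> / \<gamma>1) (Ec2 0) (Ec1 0)"
proof -
  obtain ps pc pu where lin: "linear ps" "linear pc" "linear pu"
    and mem: "\<And>v. ps v \<in> Es1 0" "\<And>v. pc v \<in> Ec1 0" "\<And>v. pu v \<in> Eu1 0"
    and dec: "\<And>v. v \<in> tangent_space M (x1 0) \<Longrightarrow> v = ps v + pc v + pu v"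
    by (fact o1.bundle_projections)
  have decomp: "v = ps v + pc v" if v: "v \<in> Ec2 0" for v
  proof -
    have "v \<in> tangent_space M (x1 0)"
      using v o2.bundles_subset_tangent(2)[of 0] same_base by auto
    then have "v = ps v + pc v + pu v" and "pu v = 0"
      using center_no_unstable_component[OF v mem] dec by blast+
    then show ?thesis by simp
  qed
  have pc_inj: "v = 0" if v: "v \<in> Ec2 0" and pc0: "pc v = 0" for v
  proof -
    have "v = ps v + pc v" by (rule decomp[OF v])
    also have "\<dots> = ps v" using pc0 by simp
    finally have "v \<in> Es1 0" using mem(1) by metis
    then show ?thesis using v by (intro center_inter_stable)
  qed
  have pc_range: "pc ` Ec2 0 \<subseteq> tangent_space M (x1 0)"
    using mem(2) o1.bundles_subset_tangent(2)[of 0] by auto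
  obtain B where B: "B \<ge> 0" "\<And>v. v \<in> Ec2 0 \<Longrightarrow> gnorm g (x1 0) (ps v) \<le> B * gnorm g (x1 0) (pc v)"
    using inner_form.gnorm_ratio_bound[OF o1.tangent_form_0 o2.bundles_subspace(2)[of 0] lin(1,2)
        pc_range pc_inj]
    by blast
  have shadow: "gnorm g ((f ^^ n) (x1 0)) (Dfn f f' (x1 0) n v - Dfn f f' (x1 0) n (pc v))
      \<le> C * C * B * (\<nu> / \<gamma>1) ^ n * gnorm g ((f ^^ n) (x1 0)) (Dfn f f' (x1 0) n (pc v))"
    if v: "v \<in> Ec2 0" for v n
  proof -
    have "Dfn f f' (x1 0) n v - Dfn f f' (x1 0) n (pc v) = Dfn f f' (x1 0) n (ps v)"
      using arg_cong[where f = "Dfn f f' (x1 0) n", OF decomp[OF v]] by (simp add: Dfn_add)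
    then have "gnorm g ((f ^^ n) (x1 0)) (Dfn f f' (x1 0) n v - Dfn f f' (x1 0) n (pc v))
        \<le> C * \<nu> ^ n * gnorm g (x1 0) (ps v)"
      using o1.stable_upper_bound[OF mem(1)] by simp
    also have "\<dots> \<le> C * \<nu> ^ n * (B * gnorm g (x1 0) (pc v))"
      using B(2)[OF v] o1.rates by (intro mult_left_mono) auto
    also have "\<dots> = C * C * B * (\<nu> / \<gamma>1) ^ n * (inverse C * \<gamma>1 ^ n * gnorm g (x1 0) (pc v))"
      using o1.rates by (simp add: field_simps power_divide)
    also have "\<dots> \<le> C * C * B * (\<nu> / \<gamma>1) ^ n * gnorm g ((f ^^ n) (x1 0)) (Dfn f f' (x1 0) n (pc v))"
      using o1.center_lower_bound[OF mem(2)] B(1) o1.rates by (intro mult_left_mono) auto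
    finally show ?thesis .
  qed
  have "pc v \<in> Ec1 0 - {0}" if "v \<in> Ec2 0 - {0}" for v
    using that mem(2) pc_inj by blast
  then show ?thesis
    unfolding shadowed_by_def using shadow by (intro exI[of _ "C * C * B"]) blast
qed

lemma unstable_shadowed:
  "shadowed_by g (\<lambda>n. (f ^^ n) (x1 0)) (Dfn f f' (x1 0)) (\<gamma>2 / \<mu>) (Eu2 0) (Eu1 0)"
proof -
  obtain ps pc pu where lin: "linear ps" "linear pc" "linear pu"
    and mem: "\<And>v. ps v \<in> Es1 0" "\<And>v. pc v \<in> Ec1 0" "\<And>v. pu v \<in> Eu1 0"
    and dec: "\<And>v. v \<in> tangent_space M (x1 0) \<Longrightarrow> v = ps v + pc v + pu v"
    by (fact o1.bundle_projections)
  have decomp: "v = ps v + pc v + pu v" if v: "v \<in> Eu2 0" for v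
    using v o2.bundles_subset_tangent(3)[of 0] same_base dec by auto
  have pu_inj: "v = 0" if v: "v \<in> Eu2 0" and pu0: "pu v = 0" for v
  proof -
    have "v = ps v + pc v + pu v" by (rule decomp[OF v])
    also have "\<dots> = ps v + pc v" using pu0 by simp
    finally show ?thesis
      using v mem by (intro unstable_inter_stable_center)
  qed
  have pu_range: "pu ` Eu2 0 \<subseteq> tangent_space M (x1 0)"
    using mem(3) o1.bundles_subset_tangent(3)[of 0] by auto
  obtain B1 where B1: "B1 \<ge> 0" "\<And>v. v \<in> Eu2 0 \<Longrightarrow> gnorm g (x1 0) (ps v) \<le> B1 * gnorm g (x1 0) (pu v)"
    using inner_form.gnorm_ratio_bound[OF o1.tangent_form_0 o2.bundles_subspace(3)[of 0] lin(1,3)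
        pu_range pu_inj]
    by blast
  obtain B2 where B2: "B2 \<ge> 0" "\<And>v. v \<in> Eu2 0 \<Longrightarrow> gnorm g (x1 0) (pc v) \<le> B2 * gnorm g (x1 0) (pu v)"
    using inner_form.gnorm_ratio_bound[OF o1.tangent_form_0 o2.bundles_subspace(3)[of 0] lin(2,3)
        pu_range pu_inj]
    by blast
  have shadow: "gnorm g ((f ^^ n) (x1 0)) (Dfn f f' (x1 0) n v - Dfn f f' (x1 0) n (pu v))
      \<le> C * C * (B1 + B2) * (\<gamma>2 / \<mu>) ^ n * gnorm g ((f ^^ n) (x1 0)) (Dfn f f' (x1 0) n (pu v))"
    if v: "v \<in> Eu2 0" for v n
  proof -
    have "Dfn f f' (x1 0) n v - Dfn f f' (x1 0) n (pu v) = Dfn f f' (x1 0) n (ps v + pc v)"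
      using arg_cong[where f = "Dfn f f' (x1 0) n", OF decomp[OF v]] by (simp add: Dfn_add)
    then have "gnorm g ((f ^^ n) (x1 0)) (Dfn f f' (x1 0) n v - Dfn f f' (x1 0) n (pu v))
        \<le> C * \<gamma>2 ^ n * (gnorm g (x1 0) (ps v) + gnorm g (x1 0) (pc v))"
      using o1.stable_center_upper_bound[OF mem(1,2)] by simp
    also have "\<dots> \<le> C * \<gamma>2 ^ n * ((B1 + B2) * gnorm g (x1 0) (pu v))"
      using B1(2)[OF v] B2(2)[OF v] o1.rates by (intro mult_left_mono) (auto simp: algebra_simps)
    also have "\<dots> = C * C * (B1 + B2) * (\<gamma>2 / \<mu>) ^ n * (inverse C * \<mu> ^ n * gnorm g (x1 0) (pu v))"
      using o1.rates by (simp add: field_simps power_divide)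
    also have "\<dots> \<le> C * C * (B1 + B2) * (\<gamma>2 / \<mu>) ^ n * gnorm g ((f ^^ n) (x1 0)) (Dfn f f' (x1 0) n (pu v))"
      using o1.unstable_lower_bound[OF mem(3)] B1(1) B2(1) o1.rates by (intro mult_left_mono) auto
    finally show ?thesis .
  qed
  have "pu v \<in> Eu1 0 - {0}" if "v \<in> Eu2 0 - {0}" for v
    using that mem(3) pu_inj by blast
  then show ?thesis
    unfolding shadowed_by_def using shadow by (intro exI[of _ "C * C * (B1 + B2)"]) blast
qed

lemma center_angle_from_tendsto_0:
  "(\<lambda>n. angle_from g ((f ^^ n) (x1 0)) (Dfn f f' (x1 0) n ` Ec2 0) (Dfn f f' (x1 0) n ` Ec1 0))
     \<longlonglongrightarrow> 0"
proof (rule angle_from_tendsto_0_if_shadowed[OF o1.tangent_form linear_Dfn _ _ _ _ _ center_shadowed])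
  show "Dfn f f' (x1 0) n ` Ec2 0 \<subseteq> tangent_space M ((f ^^ n) (x1 0))" for n
    using o2.Dfn_in_tangent(2) same_base by auto
  show "Dfn f f' (x1 0) n ` Ec1 0 \<subseteq> tangent_space M ((f ^^ n) (x1 0))" for n
    using o1.Dfn_in_tangent(2) by auto
  show "Dfn f f' (x1 0) n w \<noteq> 0" if "w \<in> Ec1 0" "w \<noteq> 0" for n w
    using that o1.Dfn_eq_0_iff o1.bundles_subset_tangent(2)[of 0] by blast
qed (use o1.rates in \<open>simp_all add: divide_less_eq\<close>)

lemma unstable_angle_from_tendsto_0:
  "(\<lambda>n. angle_from g ((f ^^ n) (x1 0)) (Dfn f f' (x1 0) n ` Eu2 0) (Dfn f f' (x1 0) n ` Eu1 0))
     \<longlonglongrightarrow> 0"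
proof (rule angle_from_tendsto_0_if_shadowed[OF o1.tangent_form linear_Dfn _ _ _ _ _ unstable_shadowed])
  show "Dfn f f' (x1 0) n ` Eu2 0 \<subseteq> tangent_space M ((f ^^ n) (x1 0))" for n
    using o2.Dfn_in_tangent(3) same_base by auto
  show "Dfn f f' (x1 0) n ` Eu1 0 \<subseteq> tangent_space M ((f ^^ n) (x1 0))" for n
    using o1.Dfn_in_tangent(3) by auto
  show "Dfn f f' (x1 0) n w \<noteq> 0" if "w \<in> Eu1 0" "w \<noteq> 0" for n w
    using that o1.Dfn_eq_0_iff o1.bundles_subset_tangent(3)[of 0] by blast
qed (use o1.rates in \<open>simp_all add: divide_less_eq\<close>)

lemma center_subspace_angle_tendsto_0:
  "(\<lambda>n. subspace_angle g ((f ^^ n) (x1 0)) (Dfn f f' (x1 0) n ` Ec1 0) (Dfn f f' (x1 0) n ` Ec2 0))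
     \<longlonglongrightarrow> 0"
  using tendsto_max[OF ph_orbit_pair.center_angle_from_tendsto_0[OF swap_orbits]
      center_angle_from_tendsto_0]
  by (simp add: subspace_angle_eq_max same_base)

lemma unstable_subspace_angle_tendsto_0:
  "(\<lambda>n. subspace_angle g ((f ^^ n) (x1 0)) (Dfn f f' (x1 0) n ` Eu1 0) (Dfn f f' (x1 0) n ` Eu2 0))
     \<longlonglongrightarrow> 0"
  using tendsto_max[OF ph_orbit_pair.unstable_angle_from_tendsto_0[OF swap_orbits]
      unstable_angle_from_tendsto_0]
  by (simp add: subspace_angle_eq_max same_base)

end

lemma ph_orbit_pairI:
  assumes "partially_hyperbolic M f f' g \<nu> \<gamma>1 \<gamma>2 \<mu> C"
    and "is_orbit M f x1" "ph_splitting M f f' g \<nu> \<gamma>1 \<gamma>2 \<mu> C x1 Es1 Ec1 Eu1"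
    and "is_orbit M f x2" "ph_splitting M f f' g \<nu> \<gamma>1 \<gamma>2 \<mu> C x2 Es2 Ec2 Eu2" and "x2 0 = x1 0"
  shows "ph_orbit_pair M f f' g \<nu> \<gamma>1 \<gamma>2 \<mu> C x1 Es1 Ec1 Eu1 x2 Es2 Ec2 Eu2"
  using assms by (simp add: ph_orbit_pair_def ph_orbit_pair_axioms_def ph_orbit_def)

theorem mainTheorem9:
  fixes M :: "'a::euclidean_space set" and f :: "'a \<Rightarrow> 'a" and f' :: "'a \<Rightarrow> 'a \<Rightarrow>\<^sub>L 'a"
    and g :: "'a \<Rightarrow> 'a \<Rightarrow> 'a \<Rightarrow> real" and \<nu> \<gamma>1 \<gamma>2 \<mu> C :: real and p :: 'a
  assumes "closed_C1_manifold M"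
    and "partially_hyperbolic M f f' g \<nu> \<gamma>1 \<gamma>2 \<mu> C"
    and "p \<in> M"
  shows "(\<forall>E1 E2. center_direction M f f' g \<nu> \<gamma>1 \<gamma>2 \<mu> C p E1 \<and>
                   center_direction M f f' g \<nu> \<gamma>1 \<gamma>2 \<mu> C p E2 \<longrightarrow>
            (\<lambda>n. subspace_angle g ((f ^^ n) p) (Dfn f f' p n ` E1) (Dfn f f' p n ` E2))
              \<longlonglongrightarrow> 0)
       \<and> (\<forall>E1 E2. unstable_direction M f f' g \<nu> \<gamma>1 \<gamma>2 \<mu> C p E1 \<and>
                   unstable_direction M f f' g \<nu> \<gamma>1 \<gamma>2 \<mu> C p E2 \<longrightarrow>
            (\<lambda>n. subspace_angle g ((f ^^ n) p) (Dfn f f' p n ` E1) (Dfn f f' p n ` E2))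
              \<longlonglongrightarrow> 0)"
proof (intro conjI allI impI; elim conjE)
  fix E1 E2
  assume "center_direction M f f' g \<nu> \<gamma>1 \<gamma>2 \<mu> C p E1" "center_direction M f f' g \<nu> \<gamma>1 \<gamma>2 \<mu> C p E2"
  then obtain x1 Es1 Ec1 Eu1 x2 Es2 Ec2 Eu2
    where "ph_orbit_pair M f f' g \<nu> \<gamma>1 \<gamma>2 \<mu> C x1 Es1 Ec1 Eu1 x2 Es2 Ec2 Eu2"
      and "x1 0 = p" "E1 = Ec1 0" "E2 = Ec2 0"
    unfolding center_direction_def using ph_orbit_pairI[OF assms(2)] by metis
  then show "(\<lambda>n. subspace_angle g ((f ^^ n) p) (Dfn f f' p n ` E1) (Dfn f f' p n ` E2)) \<longlonglongrightarrow> 0"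
    using ph_orbit_pair.center_subspace_angle_tendsto_0 by blast
next
  fix E1 E2
  assume "unstable_direction M f f' g \<nu> \<gamma>1 \<gamma>2 \<mu> C p E1" "unstable_direction M f f' g \<nu> \<gamma>1 \<gamma>2 \<mu> C p E2"
  then obtain x1 Es1 Ec1 Eu1 x2 Es2 Ec2 Eu2
    where "ph_orbit_pair M f f' g \<nu> \<gamma>1 \<gamma>2 \<mu> C x1 Es1 Ec1 Eu1 x2 Es2 Ec2 Eu2"
      and "x1 0 = p" "E1 = Eu1 0" "E2 = Eu2 0"
    unfolding unstable_direction_def using ph_orbit_pairI[OF assms(2)] by metis
  then show "(\<lambda>n. subspace_angle g ((f ^^ n) p) (Dfn f f' p n ` E1) (Dfn f f' p n ` E2)) \<longlonglongrightarrow> 0"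
    using ph_orbit_pair.unstable_subspace_angle_tendsto_0 by blast
qed

end
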